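(* Let $X\subseteq\mathbb{P}^n$ be a reduced non-degenerate scheme which is set-theoretically defined by quadrics. If $W\subseteq\mathbb{P}^n$ is a projective linear subspace of dimension $p$ such that $\Gamma:=W\cap X$ is zero-dimensional and contains $p+2$ real reduced points, then $\eta(X)\leq p$.
   Context: $S=\mathbb{R}[x_0,\dots,x_n]$, $R=S/I(X)$. $\Sigma_X\subseteq R_2$ is the cone of sums of squares of elements of $R_1$; its dual $\Sigma_X^*$ is regarded inside $S_2^*$. For $\ell\in S_2^*$, the rank of $\ell$ is the rank of the bilinear form $(f,g)\mapsto\ell(fg)$ on $S_1$. The Hankel index $\eta(X)$ is the smallest integer $p>1$ such that $\Sigma_X^*$ has an extreme ray of rank $p$ ($\infty$ if all extreme rays have rank $1$). $X$ is set-theoretically defined by quadrics if $X=\mathbb{V}(I(X)_2)$ as sets. *)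

theory Defs
  imports "HOL-Analysis.Analysis" "HOL-Library.Extended_Nat"
begin

text \<open>Coordinates x_0..x_n of P^n are indexed by a finite type 'n (so n+1 = CARD('n)).
 Homogeneous forms of degree d in S = R[x_0..x_n] are coefficient functions on
 monomials (exponent vectors 'n => nat), supported on monomials of degree d.\<close>

definition mons :: "nat \<Rightarrow> ('n::finite \<Rightarrow> nat) set" where
  "mons d = {\<alpha>. sum \<alpha> UNIV = d}"

definition is_form :: "nat \<Rightarrow> (('n::finite \<Rightarrow> nat) \<Rightarrow> real) \<Rightarrow> bool" where
  "is_form d f \<longleftrightarrow> (\<forall>\<alpha>. f \<alpha> \<noteq> 0 \<longrightarrow> \<alpha> \<in> mons d)"

definition ceval :: "nat \<Rightarrow> (('n::finite \<Rightarrow> nat) \<Rightarrow> real) \<Rightarrow> complex^'n \<Rightarrow> complex" where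
  "ceval d f z = (\<Sum>\<alpha>\<in>mons d. complex_of_real (f \<alpha>) * (\<Prod>i\<in>UNIV. (z$i) ^ (\<alpha> i)))"

definition reval :: "nat \<Rightarrow> (('n::finite \<Rightarrow> nat) \<Rightarrow> real) \<Rightarrow> real^'n \<Rightarrow> real" where
  "reval d f x = (\<Sum>\<alpha>\<in>mons d. f \<alpha> * (\<Prod>i\<in>UNIV. (x$i) ^ (\<alpha> i)))"

definition cvec :: "real^'n \<Rightarrow> complex^'n" where
  "cvec x = (\<chi> i. complex_of_real (x$i))"

text \<open>The (affine cone over the) reduced scheme X = V(F), F a set of real homogeneous
 forms given with their degrees; its points are the complex points.\<close>
definition Xpts :: "(nat \<times> (('n::finite \<Rightarrow> nat) \<Rightarrow> real)) set \<Rightarrow> (complex^'n) set" where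
  "Xpts F = {z. \<forall>(d,f)\<in>F. ceval d f z = 0}"

definition idealX :: "(complex^'n) set \<Rightarrow> nat \<Rightarrow> (('n::finite \<Rightarrow> nat) \<Rightarrow> real) set" where
  "idealX Z d = {f. is_form d f \<and> (\<forall>z\<in>Z. ceval d f z = 0)}"

definition mon2 :: "'n \<Rightarrow> 'n \<Rightarrow> ('n::finite \<Rightarrow> nat)" where
  "mon2 i j = (\<lambda>k. (if k = i then 1 else 0) + (if k = j then 1 else 0))"

definition linprod :: "real^'n \<Rightarrow> real^'n \<Rightarrow> (('n::finite \<Rightarrow> nat) \<Rightarrow> real)" where
  "linprod a b = (\<lambda>\<alpha>. \<Sum>i\<in>UNIV. \<Sum>j\<in>UNIV. if mon2 i j = \<alpha> then a$i * b$j else 0)"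

text \<open>Elements of S_2^*: functionals given by their values on the degree-2 monomials.\<close>
definition is_dual2 :: "(('n::finite \<Rightarrow> nat) \<Rightarrow> real) \<Rightarrow> bool" where
  "is_dual2 l \<longleftrightarrow> (\<forall>\<alpha>. l \<alpha> \<noteq> 0 \<longrightarrow> \<alpha> \<in> mons 2)"

definition pairing :: "(('n::finite \<Rightarrow> nat) \<Rightarrow> real) \<Rightarrow> (('n \<Rightarrow> nat) \<Rightarrow> real) \<Rightarrow> real" where
  "pairing l f = (\<Sum>\<alpha>\<in>mons 2. l \<alpha> * f \<alpha>)"

text \<open>Sigma_X^*: functionals on S_2 vanishing on I(X)_2 and nonnegative on squares of
 linear forms (i.e. the dual of the cone of sums of squares in R_2).\<close>
definition sigma_dual :: "(complex^'n) set \<Rightarrow> (('n::finite \<Rightarrow> nat) \<Rightarrow> real) set" where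
  "sigma_dual Z = {l. is_dual2 l \<and> (\<forall>f\<in>idealX Z 2. pairing l f = 0)
                     \<and> (\<forall>h. pairing l (linprod h h) \<ge> 0)}"

text \<open>Rank of l: rank of the bilinear form (f,g) |-> l(fg) on S_1 (Gram matrix in the basis x_i).\<close>
definition lrank :: "(('n::finite \<Rightarrow> nat) \<Rightarrow> real) \<Rightarrow> nat" where
  "lrank l = rank ((\<chi> i j. l (mon2 i j)) :: real^'n^'n)"

definition extreme_ray :: "(('n::finite \<Rightarrow> nat) \<Rightarrow> real) set \<Rightarrow> (('n \<Rightarrow> nat) \<Rightarrow> real) \<Rightarrow> bool" where
  "extreme_ray C l \<longleftrightarrow> l \<in> C \<and> l \<noteq> (\<lambda>_. 0) \<and>
     (\<forall>a\<in>C. \<forall>b\<in>C. l = (\<lambda>\<alpha>. a \<alpha> + b \<alpha>) \<longrightarrow> (\<exists>t\<ge>0. a = (\<lambda>\<alpha>. t * l \<alpha>)))"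

definition hankel_index :: "(complex^'n::finite) set \<Rightarrow> enat" where
  "hankel_index Z =
     (if \<exists>l. extreme_ray (sigma_dual Z) l \<and> lrank l > 1
      then enat (LEAST r. r > 1 \<and> (\<exists>l. extreme_ray (sigma_dual Z) l \<and> lrank l = r))
      else \<infinity>)"

text \<open>Complex points of the cone over the projective linear subspace W = P(L).\<close>
definition in_span_C :: "(real^'n::finite) set \<Rightarrow> complex^'n \<Rightarrow> bool" where
  "in_span_C L z \<longleftrightarrow> (\<forall>a::real^'n. (\<forall>v\<in>L. a \<bullet> v = 0) \<longrightarrow>
                         (\<Sum>i\<in>UNIV. complex_of_real (a$i) * z$i) = 0)"

text \<open>The scheme Gamma = W \<inter> X (ideal I(X) + I(W)) is reduced at the real point [q]:
 its Zariski tangent space at q is zero, i.e. the tangent space of the affine cone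
 over Gamma at q is the line spanned by q.\<close>
definition reduced_point :: "(complex^'n::finite) set \<Rightarrow> (real^'n) set \<Rightarrow> real^'n \<Rightarrow> bool" where
  "reduced_point Z L q \<longleftrightarrow>
     (\<forall>v\<in>L. (\<forall>d. \<forall>f\<in>idealX Z d. ((\<lambda>t. reval d f (q + t *\<^sub>R v)) has_real_derivative 0) (at 0))
              \<longrightarrow> v \<in> span {q})"

end

theory Submission
  imports Defs
begin

text \<open>Since $\dim W = p + 1$, the $p + 2$ real points of $\Gamma$ contain a circuit: a point
  $u = \sum_{v \in B} c_v v$ with $B$ independent, $2 \le |B| \le p + 1$ and all $c_v \neq 0$.
  As $\Gamma$ is finite, there is a linear form $h$ with $c_v h(v) > 0$ on $B$ that vanishes at no
  real point of $X$ in $\operatorname{span} B$. The functional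
  $\ell = \sum_v (c_v / h(v))\, \mathrm{ev}_v - \mathrm{ev}_u / h(u)$ lies in $\Sigma_X^*$: it
  kills $I(X)_2$ because all these points lie on $X$, and its Gram form is positive semidefinite
  by a weighted Cauchy--Schwarz inequality, with $B^\perp$ and $h$ in its kernel. An extreme ray
  below $\ell$ inherits this kernel, so its rank is less than $|B| \le p + 1$. Its rank is not one:
  a rank-one element of $\Sigma_X^*$ is the evaluation at a real point $y$ of its range, which lies
  on $X$ because $X$ is cut out by quadrics, and in $\operatorname{span} B \cap h^\perp$,
  contradicting the choice of $h$.\<close>

lemma finite_mons: "finite (mons d :: ('n::finite \<Rightarrow> nat) set)"
proof (rule finite_subset)
  show "mons d \<subseteq> (\<Pi>\<^sub>E i\<in>(UNIV::'n set). {..d})"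
    by (auto simp: mons_def intro: member_le_sum[of _ UNIV _, simplified])
qed (rule finite_PiE, auto)

lemma mon2_in_mons: "mon2 i j \<in> mons 2"
  by (simp add: mons_def mon2_def sum.distrib)

lemma mon2_commute: "mon2 i j = mon2 j i"
  by (auto simp: mon2_def)

lemma sum_eq_Suc_split:
  fixes \<alpha> :: "'n::finite \<Rightarrow> nat"
  assumes "sum \<alpha> UNIV = Suc k"
  obtains i \<beta> where "\<alpha> = (\<lambda>m. \<beta> m + (if m = i then 1 else 0))" "sum \<beta> UNIV = k"
proof -
  obtain i where i: "\<alpha> i > 0"
    using assms by (metis gr0I sum.neutral_const sum.not_neutral_contains_not_neutral nat.distinct(1))
  define \<beta> where "\<beta> = \<alpha>(i := \<alpha> i - 1)"
  have \<alpha>: "\<alpha> = (\<lambda>m. \<beta> m + (if m = i then 1 else 0))"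
    using i by (auto simp: \<beta>_def)
  then have "sum \<alpha> UNIV = sum \<beta> UNIV + 1"
    by (simp add: sum.distrib)
  with assms show ?thesis using that \<alpha> by simp
qed

lemma mons_2_eq_mon2:
  assumes "\<alpha> \<in> mons 2"
  obtains i j where "\<alpha> = mon2 i j"
proof -
  from assms have "sum \<alpha> UNIV = Suc (Suc 0)" by (simp add: mons_def)
  then obtain i \<beta> where \<alpha>: "\<alpha> = (\<lambda>m. \<beta> m + (if m = i then 1 else 0))" and \<beta>1: "sum \<beta> UNIV = Suc 0"
    by (rule sum_eq_Suc_split)
  from \<beta>1 obtain j \<gamma> where \<beta>: "\<beta> = (\<lambda>m. \<gamma> m + (if m = j then 1 else 0))" and "sum \<gamma> UNIV = 0"
    by (rule sum_eq_Suc_split)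
  then have "\<gamma> = (\<lambda>_. 0)" by auto
  then have "\<alpha> = mon2 j i" using \<alpha> \<beta> by (simp add: mon2_def)
  then show ?thesis by (rule that)
qed

section \<open>Gram matrices and quadratic forms\<close>

definition gram :: "(('n::finite \<Rightarrow> nat) \<Rightarrow> real) \<Rightarrow> real^'n^'n" where
  "gram l = (\<chi> i j. l (mon2 i j))"

definition quad_form :: "real^'n^'n \<Rightarrow> real^'n::finite \<Rightarrow> real" where
  "quad_form G h = h \<bullet> (G *v h)"

definition outer :: "real^'n::finite \<Rightarrow> real^'n^'n" where
  "outer x = (\<chi> i j. x$i * x$j)"

lemma transpose_gram: "transpose (gram l) = gram l"
  by (simp add: transpose_def gram_def mon2_commute)

lemma gram_eqI:
  assumes "is_dual2 a" "is_dual2 b" "gram a = gram b"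
  shows "a = b"
proof
  fix \<alpha>
  show "a \<alpha> = b \<alpha>"
  proof (cases "\<alpha> \<in> mons 2")
    case True
    then obtain i j where "\<alpha> = mon2 i j" by (rule mons_2_eq_mon2)
    then show ?thesis using assms(3) by (simp add: gram_def vec_eq_iff)
  qed (use assms(1,2) in \<open>metis is_dual2_def\<close>)
qed

lemma quad_form_eq_sum: "quad_form G h = (\<Sum>i\<in>UNIV. \<Sum>j\<in>UNIV. h$i * G$i$j * h$j)"
  by (simp add: quad_form_def inner_vec_def matrix_vector_mult_def sum_distrib_left mult.assoc)

lemma pairing_linprod_self: "pairing l (linprod h h) = quad_form (gram l) h"
proof -
  have "pairing l (linprod h h)
      = (\<Sum>i\<in>UNIV. \<Sum>j\<in>UNIV. \<Sum>\<alpha>\<in>mons 2. if mon2 i j = \<alpha> then h$i * l (mon2 i j) * h$j else 0)"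
    unfolding pairing_def linprod_def sum_distrib_left
    by (subst sum.swap, subst (2) sum.swap) (auto intro!: sum.cong)
  also have "\<dots> = quad_form (gram l) h"
    by (simp add: quad_form_eq_sum gram_def finite_mons mon2_in_mons)
  finally show ?thesis .
qed

lemma quad_form_outer: "quad_form (outer x) h = (h \<bullet> x)\<^sup>2"
  by (simp add: quad_form_eq_sum outer_def inner_vec_def power2_eq_square sum_product algebra_simps)

lemma quad_form_add: "quad_form (G + H) h = quad_form G h + quad_form H h"
  by (simp add: quad_form_def algebra_simps inner_add_right)

lemma quad_form_diff: "quad_form (G - H) h = quad_form G h - quad_form H h"
  by (simp add: quad_form_def algebra_simps inner_diff_right)

lemma quad_form_scaleR: "quad_form (c *\<^sub>R G) h = c * quad_form G h"
  by (simp add: quad_form_def scaleR_matrix_vector_assoc[symmetric])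

lemma quad_form_sum: "quad_form (\<Sum>x\<in>S. G x) h = (\<Sum>x\<in>S. quad_form (G x) h)"
  by (induction S rule: infinite_finite_induct) (simp_all add: quad_form_add quad_form_def[of 0])

lemma gram_zero: "gram (\<lambda>_. 0) = 0"
  by (simp add: gram_def vec_eq_iff)

lemma gram_add: "gram (\<lambda>\<alpha>. a \<alpha> + b \<alpha>) = gram a + gram b"
  by (simp add: gram_def vec_eq_iff)

lemma gram_diff: "gram (\<lambda>\<alpha>. a \<alpha> - b \<alpha>) = gram a - gram b"
  by (simp add: gram_def vec_eq_iff)

lemma gram_scale: "gram (\<lambda>\<alpha>. c * a \<alpha>) = c *\<^sub>R gram a"
  by (simp add: gram_def vec_eq_iff)

lemma gram_sum: "gram (\<lambda>\<alpha>. \<Sum>x\<in>S. a x \<alpha>) = (\<Sum>x\<in>S. gram (a x))"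
  by (simp add: gram_def vec_eq_iff sum_component)

lemma pairing_add: "pairing (\<lambda>\<alpha>. a \<alpha> + b \<alpha>) f = pairing a f + pairing b f"
  by (simp add: pairing_def algebra_simps sum.distrib)

lemma pairing_diff: "pairing (\<lambda>\<alpha>. a \<alpha> - b \<alpha>) f = pairing a f - pairing b f"
  by (simp add: pairing_def algebra_simps sum_subtractf)

lemma pairing_scale: "pairing (\<lambda>\<alpha>. c * a \<alpha>) f = c * pairing a f"
  by (simp add: pairing_def algebra_simps sum_distrib_left)

lemma pairing_sum: "pairing (\<lambda>\<alpha>. \<Sum>x\<in>S. a x \<alpha>) f = (\<Sum>x\<in>S. pairing (a x) f)"
  by (simp add: pairing_def sum_distrib_right sum.swap[of _ "mons 2"])

lemma symmetric_inner_matrix: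
  fixes G :: "real^'n::finite^'n"
  assumes "transpose G = G"
  shows "h \<bullet> (G *v k) = k \<bullet> (G *v h)"
  by (metis assms dot_lmul_matrix inner_commute transpose_matrix_vector)

lemma linear_le_quadratic_imp_zero:
  fixes a b :: real
  assumes le: "\<And>s. 2 * s * a \<le> s\<^sup>2 * b" and "0 \<le> a" "0 \<le> b"
  shows "a = 0"
proof (rule ccontr)
  assume "a \<noteq> 0"
  then have "a > 0" using \<open>0 \<le> a\<close> by simp
  define c where "c = (a / (b + 1))\<^sup>2"
  have "c * (2 * (b + 1)) = 2 * (a / (b + 1)) * a"
    using \<open>0 \<le> b\<close> by (simp add: c_def power2_eq_square divide_simps)
  also have "\<dots> \<le> c * b" unfolding c_def by (rule le)
  finally have "2 * (b + 1) \<le> b"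
    using \<open>a > 0\<close> \<open>0 \<le> b\<close> by (simp add: c_def)
  then show False using \<open>0 \<le> b\<close> by simp
qed

lemma psd_kernel:
  fixes G :: "real^'n::finite^'n"
  assumes sym: "transpose G = G" and psd: "\<And>h. quad_form G h \<ge> 0" and k: "quad_form G k = 0"
  shows "G *v k = 0"
proof -
  define e where "e = G *v k"
  have "0 \<le> quad_form G (k - s *\<^sub>R e)" for s
    by (rule psd)
  also have "quad_form G (k - s *\<^sub>R e) = s\<^sup>2 * quad_form G e - 2 * s * (e \<bullet> e)" for s
    using k symmetric_inner_matrix[OF sym, of k e]
    by (simp add: quad_form_def matrix_vector_mult_diff_distrib inner_diff_left inner_diff_right
        e_def power2_eq_square algebra_simps)
  finally have "2 * s * (e \<bullet> e) \<le> s\<^sup>2 * quad_form G e" for s by simp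
  then have "e \<bullet> e = 0"
    using psd by (intro linear_le_quadratic_imp_zero) auto
  then show ?thesis by (simp add: e_def)
qed

lemma symmetric_range_subset_span:
  fixes G :: "real^'n::finite^'n"
  assumes sym: "transpose G = G" and ker: "\<And>h. (\<forall>v\<in>B. h \<bullet> v = 0) \<Longrightarrow> G *v h = 0"
  shows "G *v x \<in> span B"
proof -
  obtain y r where y: "y \<in> span B" and r: "\<And>w. w \<in> span B \<Longrightarrow> orthogonal r w"
    and Gx: "G *v x = y + r"
    using orthogonal_subspace_decomp_exists[of B "G *v x"] by metis
  have "G *v r = 0" using r by (intro ker) (simp add: orthogonal_def span_base)
  then have "r \<bullet> (G *v x) = 0" using symmetric_inner_matrix[OF sym, of r x] by simp
  then have "r \<bullet> r = 0" using r[OF y] by (simp add: Gx inner_add_right orthogonal_def)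
  then show ?thesis using Gx y by simp
qed

lemma rank_lt_card_of_kernel:
  fixes G :: "real^'n::finite^'n"
  assumes sym: "transpose G = G" and "independent B"
    and ker: "\<And>h. (\<forall>v\<in>B. h \<bullet> v = 0) \<Longrightarrow> G *v h = 0" and "G *v k = 0"
    and "x \<in> span B" "k \<bullet> x \<noteq> 0"
  shows "rank G < card B"
proof -
  define S where "S = span B \<inter> {y. k \<bullet> y = 0}"
  have "subspace S" unfolding S_def by (intro subspace_inter subspace_span subspace_hyperplane)
  have "range ((*v) G) \<subseteq> S"
    using symmetric_range_subset_span[OF sym ker] symmetric_inner_matrix[OF sym, of k] \<open>G *v k = 0\<close>
    by (auto simp: S_def)
  then have "rank G \<le> dim S" by (simp add: rank_dim_range dim_subset)
  also have "dim S < dim (span B)"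
  proof (rule dim_psubset)
    have "S \<subset> span B" using assms(5,6) by (auto simp: S_def)
    moreover have "span S = S" using \<open>subspace S\<close> by (rule span_eq_iff[THEN iffD2])
    ultimately show "span S \<subset> span (span B)" by (simp only: span_span)
  qed
  also have "\<dots> = card B" using \<open>independent B\<close> by (simp add: dim_eq_card_independent)
  finally show ?thesis .
qed

lemma outer_mult_vector: "outer y *v h = (y \<bullet> h) *\<^sub>R y"
  by (simp add: outer_def matrix_vector_mult_def inner_vec_def vec_eq_iff sum_distrib_left algebra_simps)

lemma outer_scaleR: "outer (a *\<^sub>R x) = a\<^sup>2 *\<^sub>R outer x"
  by (simp add: outer_def vec_eq_iff power2_eq_square mult_ac)

lemma rank_le_one_columns:
  fixes G :: "real^'n::finite^'m::finite"
  assumes "rank G \<le> 1"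
  obtains x g where "\<And>i j. G$i$j = g j * x$i"
proof -
  obtain C where C: "independent C" "range ((*v) G) \<subseteq> span C" "card C = rank G"
    using basis_exists[of "range ((*v) G)"] by (metis rank_dim_range)
  have "finite C" using C(1) by (rule finiteI_independent)
  obtain x where "C \<subseteq> {x}"
  proof (cases "C = {}")
    case False
    then obtain x where "x \<in> C" by blast
    moreover have "card C \<le> Suc 0" using assms C(3) by simp
    ultimately have "C = {x}" using \<open>finite C\<close> by (auto simp: card_le_Suc0_iff_eq)
    then show ?thesis using that by blast
  qed (use that in blast)
  then have "G *v axis j 1 \<in> span {x}" for j
    using C(2) span_mono[of C "{x}"] by blast
  then have "G *v axis j 1 \<in> range (\<lambda>c. c *\<^sub>R x)" for j
    by (simp add: span_singleton)
  then have "\<forall>j. \<exists>c. G *v axis j 1 = c *\<^sub>R x" by blast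
  from choice[OF this] obtain g where g: "\<forall>j. G *v axis j 1 = g j *\<^sub>R x" ..
  have "G$i$j = g j * x$i" for i j
    using arg_cong[OF g[rule_format, of j], of "\<lambda>v. v$i"] by (simp add: matrix_vector_mult_basis column_def)
  then show ?thesis by (rule that)
qed

lemma psd_rank_le_one_eq_outer:
  fixes G :: "real^'n::finite^'n"
  assumes sym: "transpose G = G" and psd: "\<And>h. quad_form G h \<ge> 0" and "rank G \<le> 1"
  obtains y where "G = outer y"
proof (cases "G = 0")
  case True
  then show ?thesis using that[of 0] by (simp add: outer_def vec_eq_iff)
next
  case False
  obtain x g where G: "\<And>i j. G$i$j = g j * x$i"
    using rank_le_one_columns[OF assms(3)] by metis
  obtain i0 where "x$i0 \<noteq> 0"
  proof -
    obtain i j where "G$i$j \<noteq> 0" using False by (auto simp: vec_eq_iff)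
    then show ?thesis using that[of i] G[of i j] by auto
  qed
  define c where "c = g i0 / x$i0"
  have "g j = c * x$j" for j
  proof -
    have "G$j$i0 = G$i0$j" using arg_cong[OF sym, of "\<lambda>M. M$j$i0"] by (simp add: transpose_def)
    then show ?thesis using \<open>x$i0 \<noteq> 0\<close> by (simp add: G c_def field_simps)
  qed
  then have G_outer: "G = c *\<^sub>R outer x" by (simp add: vec_eq_iff G outer_def)
  have "0 \<le> quad_form G x" by (rule psd)
  also have "\<dots> = c * (x \<bullet> x)\<^sup>2" by (simp add: G_outer quad_form_scaleR quad_form_outer)
  finally have "c \<ge> 0" using \<open>x$i0 \<noteq> 0\<close> by (auto simp: zero_le_mult_iff vec_eq_iff)
  then have "G = outer (sqrt c *\<^sub>R x)" by (simp add: G_outer outer_scaleR)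
  then show ?thesis by (rule that)
qed

section \<open>The dual cone and its extreme rays\<close>

lemma sigma_dual_iff:
  "l \<in> sigma_dual Z \<longleftrightarrow>
     is_dual2 l \<and> (\<forall>f\<in>idealX Z 2. pairing l f = 0) \<and> (\<forall>h. quad_form (gram l) h \<ge> 0)"
  by (simp add: sigma_dual_def pairing_linprod_self)

lemma sigma_dual_quad_form_nonneg: "l \<in> sigma_dual Z \<Longrightarrow> quad_form (gram l) h \<ge> 0"
  by (simp add: sigma_dual_iff)

lemma sigma_dual_kernel: "l \<in> sigma_dual Z \<Longrightarrow> quad_form (gram l) h = 0 \<Longrightarrow> gram l *v h = 0"
  by (rule psd_kernel) (simp_all add: transpose_gram sigma_dual_quad_form_nonneg)

lemma is_dual2_add: "is_dual2 a \<Longrightarrow> is_dual2 b \<Longrightarrow> is_dual2 (\<lambda>\<alpha>. a \<alpha> + b \<alpha>)"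
  unfolding is_dual2_def by (metis add.right_neutral)

lemma is_dual2_diff_scaled: "is_dual2 a \<Longrightarrow> is_dual2 b \<Longrightarrow> is_dual2 (\<lambda>\<alpha>. a \<alpha> - c * b \<alpha>)"
  unfolding is_dual2_def by (metis diff_zero mult_zero_right)

lemma sigma_dual_add:
  "a \<in> sigma_dual Z \<Longrightarrow> b \<in> sigma_dual Z \<Longrightarrow> (\<lambda>\<alpha>. a \<alpha> + b \<alpha>) \<in> sigma_dual Z"
  by (auto simp: sigma_dual_iff is_dual2_add gram_add quad_form_add pairing_add add_nonneg_nonneg)

lemma sigma_dual_scale:
  "a \<in> sigma_dual Z \<Longrightarrow> c \<ge> 0 \<Longrightarrow> (\<lambda>\<alpha>. c * a \<alpha>) \<in> sigma_dual Z"
  by (auto simp: sigma_dual_iff is_dual2_def gram_scale quad_form_scaleR pairing_scale)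

lemma diff_scaled_in_sigma_dual_iff:
  assumes "l \<in> sigma_dual Z" "a \<in> sigma_dual Z"
  shows "(\<lambda>\<alpha>. l \<alpha> - c * a \<alpha>) \<in> sigma_dual Z \<longleftrightarrow>
         (\<forall>h. c * quad_form (gram a) h \<le> quad_form (gram l) h)"
  using assms
  by (auto simp: sigma_dual_iff is_dual2_diff_scaled gram_diff gram_scale quad_form_diff
      quad_form_scaleR pairing_diff pairing_scale)

lemma sigma_dual_eq_zeroI:
  assumes "l \<in> sigma_dual Z" "gram l = 0"
  shows "l = (\<lambda>_. 0)"
  by (rule gram_eqI) (use assms in \<open>auto simp: sigma_dual_iff is_dual2_def gram_def vec_eq_iff\<close>)

lemma sigma_dual_quad_form_pos:
  assumes "a \<in> sigma_dual Z" "a \<noteq> (\<lambda>_. 0)"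
  obtains h where "quad_form (gram a) h > 0"
proof -
  have "gram a \<noteq> 0" using assms sigma_dual_eq_zeroI by blast
  then obtain h where "gram a *v h \<noteq> 0" by (metis matrix_eq matrix_vector_mult_0)
  then have "quad_form (gram a) h \<noteq> 0" using assms(1) sigma_dual_kernel by blast
  then show ?thesis using sigma_dual_quad_form_nonneg[OF assms(1)] that by (metis order_le_less)
qed

definition below :: "(complex^'n) set \<Rightarrow> (('n::finite \<Rightarrow> nat) \<Rightarrow> real) \<Rightarrow> (('n \<Rightarrow> nat) \<Rightarrow> real) set" where
  "below Z l = {a \<in> sigma_dual Z. (\<lambda>\<alpha>. l \<alpha> - a \<alpha>) \<in> sigma_dual Z}"

lemma below_trans:
  assumes "m \<in> below Z l"
  shows "below Z m \<subseteq> below Z l"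
proof
  fix a assume "a \<in> below Z m"
  then have "(\<lambda>\<alpha>. (m \<alpha> - a \<alpha>) + (l \<alpha> - m \<alpha>)) \<in> sigma_dual Z"
    using assms by (intro sigma_dual_add) (auto simp: below_def)
  then show "a \<in> below Z l" using \<open>a \<in> below Z m\<close> by (simp add: below_def)
qed

lemma below_kernel:
  assumes "m \<in> below Z l" "quad_form (gram l) h = 0"
  shows "gram m *v h = 0"
proof -
  have m: "m \<in> sigma_dual Z" and lm: "(\<lambda>\<alpha>. l \<alpha> - m \<alpha>) \<in> sigma_dual Z"
    using assms(1) by (auto simp: below_def)
  have "quad_form (gram m) h \<le> 0"
    using sigma_dual_quad_form_nonneg[OF lm, of h] assms(2) by (simp add: gram_diff quad_form_diff)
  then show ?thesis using m sigma_dual_kernel sigma_dual_quad_form_nonneg by (metis order_antisym)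
qed

lemma exists_maximal_diff_scaled:
  assumes l: "l \<in> sigma_dual Z" and a: "a \<in> sigma_dual Z" "a \<noteq> (\<lambda>_. 0)"
    and la: "(\<lambda>\<alpha>. l \<alpha> - a \<alpha>) \<in> sigma_dual Z"
  obtains s where "s \<ge> 1" "(\<lambda>\<alpha>. l \<alpha> - s * a \<alpha>) \<in> sigma_dual Z"
    "\<And>\<epsilon>. \<epsilon> > 0 \<Longrightarrow> (\<lambda>\<alpha>. l \<alpha> - (s + \<epsilon>) * a \<alpha>) \<notin> sigma_dual Z"
proof -
  define T where "T = {c. (\<lambda>\<alpha>. l \<alpha> - c * a \<alpha>) \<in> sigma_dual Z}"
  have "1 \<in> T" using la by (simp add: T_def)
  have T_iff: "c \<in> T \<longleftrightarrow> (\<forall>h. c * quad_form (gram a) h \<le> quad_form (gram l) h)" for c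
    unfolding T_def mem_Collect_eq by (rule diff_scaled_in_sigma_dual_iff[OF l a(1)])
  obtain h0 where h0: "quad_form (gram a) h0 > 0" using sigma_dual_quad_form_pos[OF a] .
  have bdd: "bdd_above T"
  proof (rule bdd_aboveI)
    fix c assume "c \<in> T"
    then show "c \<le> quad_form (gram l) h0 / quad_form (gram a) h0"
      using h0 by (simp add: T_iff pos_le_divide_eq)
  qed
  define s where "s = Sup T"
  have "s \<ge> 1" unfolding s_def using \<open>1 \<in> T\<close> bdd by (rule cSup_upper)
  moreover have "s \<in> T"
    unfolding T_iff
  proof
    fix h
    show "s * quad_form (gram a) h \<le> quad_form (gram l) h"
    proof (cases "quad_form (gram a) h > 0")
      case True
      have "s \<le> quad_form (gram l) h / quad_form (gram a) h"
        unfolding s_def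
        by (rule cSup_least) (use \<open>1 \<in> T\<close> in blast, use True in \<open>simp add: T_iff pos_le_divide_eq\<close>)
      then show ?thesis using True by (simp add: pos_le_divide_eq)
    next
      case False
      then show ?thesis using \<open>s \<ge> 1\<close> sigma_dual_quad_form_nonneg[OF l, of h]
        by (smt (verit) mult_nonneg_nonpos)
    qed
  qed
  moreover have "s + \<epsilon> \<notin> T" if "\<epsilon> > 0" for \<epsilon>
    using cSup_upper[OF _ bdd, of "s + \<epsilon>"] that by (auto simp: s_def)
  ultimately show ?thesis using that by (auto simp: T_def)
qed

lemma gram_not_in_span_below:
  assumes l: "l \<in> sigma_dual Z" and a: "a \<in> sigma_dual Z"
    and maximal: "\<And>\<epsilon>. \<epsilon> > 0 \<Longrightarrow> (\<lambda>\<alpha>. l \<alpha> - \<epsilon> * a \<alpha>) \<notin> sigma_dual Z"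
  shows "gram a \<notin> span (gram ` below Z l)"
proof
  assume "gram a \<in> span (gram ` below Z l)"
  then obtain X u where X: "finite X" "X \<subseteq> gram ` below Z l" and a_eq: "gram a = (\<Sum>g\<in>X. u g *\<^sub>R g)"
    unfolding span_explicit mem_Collect_eq by blast
  define M where "M = 1 + (\<Sum>g\<in>X. \<bar>u g\<bar>)"
  have "M > 0" unfolding M_def using sum_abs_ge_zero[of u X] by linarith
  have g_bounds: "0 \<le> quad_form g h \<and> quad_form g h \<le> quad_form (gram l) h" if "g \<in> X" for g h
  proof -
    obtain m where m: "m \<in> below Z l" "g = gram m" using X(2) \<open>g \<in> X\<close> by blast
    then have "m \<in> sigma_dual Z" "(\<lambda>\<alpha>. l \<alpha> - m \<alpha>) \<in> sigma_dual Z" by (auto simp: below_def)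
    from this[THEN sigma_dual_quad_form_nonneg, of h] show ?thesis
      by (simp add: m(2) gram_diff quad_form_diff)
  qed
  have "quad_form (gram a) h \<le> M * quad_form (gram l) h" for h
  proof -
    have "quad_form (gram a) h = (\<Sum>g\<in>X. u g * quad_form g h)"
      unfolding a_eq quad_form_sum quad_form_scaleR ..
    also have "\<dots> \<le> (\<Sum>g\<in>X. \<bar>u g\<bar> * quad_form (gram l) h)"
    proof (rule sum_mono)
      fix g assume "g \<in> X"
      have "u g * quad_form g h \<le> \<bar>u g\<bar> * quad_form g h"
        using g_bounds[OF \<open>g \<in> X\<close>] by (intro mult_right_mono) auto
      also have "\<dots> \<le> \<bar>u g\<bar> * quad_form (gram l) h"
        using g_bounds[OF \<open>g \<in> X\<close>] by (intro mult_left_mono) auto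
      finally show "u g * quad_form g h \<le> \<bar>u g\<bar> * quad_form (gram l) h" .
    qed
    also have "\<dots> \<le> M * quad_form (gram l) h"
      using sigma_dual_quad_form_nonneg[OF l, of h] by (simp add: M_def sum_distrib_right distrib_right)
    finally show ?thesis .
  qed
  then have "\<forall>h. (1 / M) * quad_form (gram a) h \<le> quad_form (gram l) h"
    using \<open>M > 0\<close> by (simp add: mult.commute pos_divide_le_eq)
  then have "(\<lambda>\<alpha>. l \<alpha> - (1 / M) * a \<alpha>) \<in> sigma_dual Z"
    using diff_scaled_in_sigma_dual_iff[OF l a] by blast
  then show False using maximal[of "1 / M"] \<open>M > 0\<close> by simp
qed

lemma zero_in_sigma_dual: "(\<lambda>_. 0) \<in> sigma_dual Z"
  by (simp add: sigma_dual_iff is_dual2_def pairing_def quad_form_eq_sum gram_def)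

text \<open>Pushing l along $-a$ as far as the cone allows gives an element below l whose face no
  longer contains a.\<close>
lemma exists_smaller_face_below:
  assumes l: "l \<in> sigma_dual Z" and a_below: "a \<in> below Z l"
    and not_ray: "\<not> (\<exists>t\<ge>0. a = (\<lambda>\<alpha>. t * l \<alpha>))"
  obtains l' where "l' \<in> below Z l" "l' \<noteq> (\<lambda>_. 0)"
    "span (gram ` below Z l') \<subset> span (gram ` below Z l)"
proof -
  have a: "a \<in> sigma_dual Z" "(\<lambda>\<alpha>. l \<alpha> - a \<alpha>) \<in> sigma_dual Z" using a_below by (auto simp: below_def)
  have "a \<noteq> (\<lambda>_. 0)" using not_ray by force
  obtain s where s: "s \<ge> 1" "(\<lambda>\<alpha>. l \<alpha> - s * a \<alpha>) \<in> sigma_dual Z"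
    and s_max: "\<And>\<epsilon>. \<epsilon> > 0 \<Longrightarrow> (\<lambda>\<alpha>. l \<alpha> - (s + \<epsilon>) * a \<alpha>) \<notin> sigma_dual Z"
    using exists_maximal_diff_scaled[OF l a(1) \<open>a \<noteq> _\<close> a(2)] by blast
  define l' where "l' = (\<lambda>\<alpha>. l \<alpha> - s * a \<alpha>)"
  have "l' \<noteq> (\<lambda>_. 0)"
  proof
    assume "l' = (\<lambda>_. 0)"
    then have "a = (\<lambda>\<alpha>. (1 / s) * l \<alpha>)"
      using s(1) by (auto simp: l'_def fun_eq_iff field_simps dest: fun_cong)
    moreover have "1 / s \<ge> 0" using s(1) by simp
    ultimately show False using not_ray by blast
  qed
  have l'_below: "l' \<in> below Z l"
    using s sigma_dual_scale[OF a(1), of s] by (simp add: below_def l'_def)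
  have "(\<lambda>\<alpha>. l' \<alpha> - \<epsilon> * a \<alpha>) = (\<lambda>\<alpha>. l \<alpha> - (s + \<epsilon>) * a \<alpha>)" for \<epsilon>
    by (simp add: l'_def algebra_simps)
  then have "gram a \<notin> span (gram ` below Z l')"
    using s_max by (intro gram_not_in_span_below[OF s(2)[folded l'_def] a(1)]) auto
  moreover have "gram a \<in> span (gram ` below Z l)" using a_below by (intro span_base imageI)
  moreover have "span (gram ` below Z l') \<subseteq> span (gram ` below Z l)"
    using below_trans[OF l'_below] by (intro span_mono image_mono)
  ultimately show ?thesis using that[OF l'_below \<open>l' \<noteq> _\<close>] by blast
qed

lemma exists_extreme_ray_below:
  assumes "l0 \<in> sigma_dual Z" "l0 \<noteq> (\<lambda>_. 0)"
  obtains l where "extreme_ray (sigma_dual Z) l" "l \<in> below Z l0"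
proof -
  define S where "S = {l \<in> below Z l0. l \<noteq> (\<lambda>_. 0)}"
  define face_dim where "face_dim l = dim (span (gram ` below Z l))" for l
  have "l0 \<in> S" using assms zero_in_sigma_dual by (simp add: S_def below_def)
  then obtain l where "l \<in> S" and min: "\<And>l'. l' \<in> S \<Longrightarrow> face_dim l \<le> face_dim l'"
    using ex_has_least_nat[of "\<lambda>l. l \<in> S" l0 face_dim] by blast
  then have l: "l \<in> sigma_dual Z" "l \<noteq> (\<lambda>_. 0)" "l \<in> below Z l0" by (auto simp: S_def below_def)
  have "extreme_ray (sigma_dual Z) l"
    unfolding extreme_ray_def
  proof (intro conjI ballI impI l(1,2))
    fix a b assume "a \<in> sigma_dual Z" "b \<in> sigma_dual Z" "l = (\<lambda>\<alpha>. a \<alpha> + b \<alpha>)"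
    then have "a \<in> below Z l" by (simp add: below_def)
    show "\<exists>t\<ge>0. a = (\<lambda>\<alpha>. t * l \<alpha>)"
    proof (rule ccontr)
      assume "\<not> ?thesis"
      then obtain l' where "l' \<in> below Z l" "l' \<noteq> (\<lambda>_. 0)"
        and smaller: "span (gram ` below Z l') \<subset> span (gram ` below Z l)"
        using exists_smaller_face_below[OF l(1) \<open>a \<in> below Z l\<close>] by blast
      then have "l' \<in> S" using below_trans l(3) by (auto simp: S_def)
      have "face_dim l' < face_dim l"
        unfolding face_dim_def using smaller by (intro dim_psubset) (simp add: span_span)
      then show False using min[OF \<open>l' \<in> S\<close>] by simp
    qed
  qed
  then show ?thesis using l(3) by (rule that)
qed

section \<open>Point evaluations\<close>

lemma ceval_cvec: "ceval d f (cvec x) = complex_of_real (reval d f x)"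
  by (simp add: ceval_def reval_def cvec_def)

definition point_eval :: "real^'n \<Rightarrow> (('n::finite \<Rightarrow> nat) \<Rightarrow> real)" where
  "point_eval x = (\<lambda>\<alpha>. if \<alpha> \<in> mons 2 then \<Prod>i\<in>UNIV. x$i ^ \<alpha> i else 0)"

lemma prod_power_mon2: "(\<Prod>k\<in>UNIV. (x::real^'n::finite)$k ^ mon2 i j k) = x$i * x$j"
proof -
  have "(\<Prod>k\<in>UNIV. x$k ^ mon2 i j k) = (\<Prod>k\<in>UNIV. (if k = i then x$k else 1) * (if k = j then x$k else 1))"
    by (rule prod.cong) (auto simp: mon2_def power_add)
  also have "\<dots> = x$i * x$j" by (simp add: prod.distrib)
  finally show ?thesis .
qed

lemma gram_point_eval: "gram (point_eval x) = outer x"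
  by (simp add: gram_def point_eval_def outer_def mon2_in_mons prod_power_mon2)

lemma pairing_point_eval: "pairing (point_eval x) f = reval 2 f x"
  by (simp add: pairing_def point_eval_def reval_def mult.commute)

lemma is_dual2_point_eval: "is_dual2 (point_eval x)"
  by (simp add: is_dual2_def point_eval_def)

lemma point_eval_in_sigma_dual:
  assumes "cvec x \<in> Z"
  shows "point_eval x \<in> sigma_dual Z"
proof -
  have "reval 2 f x = 0" if "f \<in> idealX Z 2" for f
    using that assms ceval_cvec[of 2 f x] by (simp add: idealX_def)
  then show ?thesis
    by (simp add: sigma_dual_iff is_dual2_point_eval gram_point_eval quad_form_outer pairing_point_eval)
qed

lemma sigma_dual_gram_outer:
  assumes "l \<in> sigma_dual Z" "gram l = outer y"
  shows "\<forall>f\<in>idealX Z 2. ceval 2 f (cvec y) = 0"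
proof -
  have "l = point_eval y"
    using assms by (intro gram_eqI) (simp_all add: sigma_dual_iff gram_point_eval is_dual2_point_eval)
  then show ?thesis using assms(1) by (simp add: sigma_dual_iff pairing_point_eval ceval_cvec)
qed

section \<open>Circuits and separating linear forms\<close>

lemma exists_inner_eq_on_independent:
  fixes B :: "(real^'n::finite) set"
  assumes "independent B"
  obtains h where "\<And>v. v \<in> B \<Longrightarrow> h \<bullet> v = \<phi> v"
proof -
  obtain g :: "real^'n \<Rightarrow> real" where g: "linear g" "\<And>v. v \<in> B \<Longrightarrow> g v = \<phi> v"
    using linear_independent_extend[OF assms] by blast
  have "adjoint g 1 \<bullet> v = \<phi> v" if "v \<in> B" for v
    using adjoint_clauses(1)[OF g(1), of v 1] g(2)[OF that] by (simp add: inner_commute)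
  then show ?thesis by (rule that)
qed

lemma finite_affine_roots:
  fixes c d :: real
  assumes "c \<noteq> 0 \<or> d \<noteq> 0"
  shows "finite {s. c + s * d = 0}"
proof (rule finite_subset)
  show "{s. c + s * d = 0} \<subseteq> {- c / d}" using assms by (cases "d = 0") (auto simp: field_simps)
qed simp

lemma exists_pos_weights_avoiding:
  fixes A :: "('v \<Rightarrow> real) set"
  assumes "finite A" "finite B" "\<And>a. a \<in> A \<Longrightarrow> \<exists>v\<in>B. a v \<noteq> 0"
  obtains t where "\<forall>v\<in>B. t v > 0" "\<forall>a\<in>A. (\<Sum>v\<in>B. a v * t v) \<noteq> 0"
  using assms(1,3)
proof (induction A arbitrary: thesis rule: finite_induct)
  case empty
  show ?case by (rule empty.prems(1)[of "\<lambda>_. 1"]) auto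
next
  case (insert a A)
  obtain t where t: "\<forall>v\<in>B. t v > 0" "\<forall>a'\<in>A. (\<Sum>v\<in>B. a' v * t v) \<noteq> 0"
    using insert.IH insert.prems(2) by blast
  obtain v0 where v0: "v0 \<in> B" "a v0 \<noteq> 0" using insert.prems(2) by blast
  define t' where "t' s v = t v + (if v = v0 then s else 0)" for s v
  have sum_t': "(\<Sum>v\<in>B. a' v * t' s v) = (\<Sum>v\<in>B. a' v * t v) + s * a' v0" for a' s
    using v0(1) assms(2) by (simp add: t'_def distrib_left sum.distrib if_distrib[of "(*) _"] cong: if_cong)
  define bad where "bad = (\<Union>a'\<in>insert a A. {s. (\<Sum>v\<in>B. a' v * t v) + s * a' v0 = 0})"
  have "finite bad"
    unfolding bad_def using insert.hyps(1) t(2) v0(2) by (intro finite_UN_I finite_affine_roots) auto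
  then obtain s :: real where s: "s > 0" "s \<notin> bad"
    using infinite_Ioi[of 0] by (metis finite_subset greaterThan_iff subsetI)
  show ?case
  proof (rule insert.prems(1)[of "t' s"])
    show "\<forall>v\<in>B. t' s v > 0" using t(1) s(1) by (simp add: t'_def add_pos_nonneg)
    show "\<forall>a'\<in>insert a A. (\<Sum>v\<in>B. a' v * t' s v) \<noteq> 0" using s(2) by (auto simp: sum_t' bad_def)
  qed
qed

lemma exists_minimal_dependent:
  fixes Q :: "'a::real_vector set"
  assumes "finite Q" "dependent Q"
  obtains C where "C \<subseteq> Q" "dependent C" "\<And>C'. C' \<subset> C \<Longrightarrow> independent C'"
proof -
  obtain C where C: "C \<subseteq> Q" "dependent C"
    and min: "\<And>C'. C' \<subseteq> Q \<and> dependent C' \<Longrightarrow> card C \<le> card C'"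
    using ex_has_least_nat[of "\<lambda>C. C \<subseteq> Q \<and> dependent C" Q card] assms(2) by blast
  have "independent C'" if "C' \<subset> C" for C'
    using min[of C'] that C(1) psubset_card_mono[OF finite_subset[OF C(1) assms(1)] that] by auto
  with C show ?thesis by (rule that)
qed

lemma minimal_dependent_coefficients:
  fixes C :: "'a::real_vector set"
  assumes "finite C" "dependent C" "\<And>C'. C' \<subset> C \<Longrightarrow> independent C'" "u \<in> C"
  obtains c where "independent (C - {u})" "u = (\<Sum>v\<in>C - {u}. c v *\<^sub>R v)"
    "\<forall>v\<in>C - {u}. c v \<noteq> 0"
proof -
  define B where "B = C - {u}"
  have "finite B" "u \<notin> B" using assms(1) by (auto simp: B_def)
  have "independent B" using assms(3,4) by (auto simp: B_def)
  have C_eq: "C = insert u B" using assms(4) by (auto simp: B_def)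
  then have "u \<in> span B"
    using assms(2) independent_insert[of u B] \<open>u \<notin> B\<close> \<open>independent B\<close> by simp
  then obtain c where u: "u = (\<Sum>v\<in>B. c v *\<^sub>R v)"
    using span_finite[OF \<open>finite B\<close>] by auto
  have "\<forall>v\<in>B. c v \<noteq> 0"
  proof (intro ballI notI)
    fix v assume "v \<in> B" "c v = 0"
    then have "u = (\<Sum>w\<in>B - {v}. c w *\<^sub>R w)"
      using u sum.remove[OF \<open>finite B\<close> \<open>v \<in> B\<close>, of "\<lambda>w. c w *\<^sub>R w"] by simp
    moreover have "(\<Sum>w\<in>B - {v}. c w *\<^sub>R w) \<in> span (B - {v})"
      by (intro span_sum span_scale span_base)
    ultimately have "u \<in> span (B - {v})" by simp
    then have "dependent (insert u (B - {v}))"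
      using independent_insert[of u "B - {v}"] \<open>u \<notin> B\<close> by auto
    moreover have "insert u (B - {v}) \<subset> C" using C_eq \<open>v \<in> B\<close> by (auto simp: B_def)
    ultimately show False using assms(3) by blast
  qed
  with \<open>independent B\<close> u show ?thesis unfolding B_def by (rule that)
qed

lemma exists_circuit:
  fixes Q :: "'a::real_vector set"
  assumes "finite Q" "dependent Q" "0 \<notin> Q"
    and not_collinear: "\<forall>q1\<in>Q. \<forall>q2\<in>Q. q1 \<noteq> q2 \<longrightarrow> \<not> (\<exists>c. q1 = c *\<^sub>R q2)"
  obtains u B c where "u \<in> Q" "B \<subseteq> Q - {u}" "independent B" "2 \<le> card B"
    "u = (\<Sum>v\<in>B. c v *\<^sub>R v)" "\<forall>v\<in>B. c v \<noteq> 0"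
proof -
  obtain C where C: "C \<subseteq> Q" "dependent C" "\<And>C'. C' \<subset> C \<Longrightarrow> independent C'"
    using exists_minimal_dependent[OF assms(1,2)] by blast
  have "finite C" using C(1) assms(1) by (rule finite_subset)
  obtain u where "u \<in> C" using C(2) independent_empty by (metis ex_in_conv)
  obtain c where B: "independent (C - {u})" "u = (\<Sum>v\<in>C - {u}. c v *\<^sub>R v)"
    "\<forall>v\<in>C - {u}. c v \<noteq> 0"
    using minimal_dependent_coefficients[OF \<open>finite C\<close> C(2,3) \<open>u \<in> C\<close>] by blast
  have "C - {u} \<noteq> {}"
  proof
    assume "C - {u} = {}"
    then have "u = 0" using B(2) by (simp only: sum.empty)
    then show False using \<open>u \<in> C\<close> C(1) assms(3) by blast
  qed
  then have "card (C - {u}) \<noteq> 0" using \<open>finite C\<close> by simp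
  moreover have "card (C - {u}) \<noteq> 1"
  proof
    assume "card (C - {u}) = 1"
    then obtain v where "C - {u} = {v}" by (rule card_1_singletonE)
    moreover have "u \<noteq> v" "u \<in> Q" "v \<in> Q" using \<open>u \<in> C\<close> C(1) \<open>C - {u} = {v}\<close> by auto
    ultimately show False using B(2) not_collinear by auto
  qed
  ultimately have "2 \<le> card (C - {u})" by linarith
  moreover have "u \<in> Q" "C - {u} \<subseteq> Q - {u}" using \<open>u \<in> C\<close> C(1) by auto
  ultimately show ?thesis using that[OF _ _ B(1) _ B(2,3)] by blast
qed

lemma exists_circuit_in_subspace:
  fixes Q :: "'a::euclidean_space set"
  assumes "subspace L" "Q \<subseteq> L" "dim L < card Q" "0 \<notin> Q"
    and not_collinear: "\<forall>q1\<in>Q. \<forall>q2\<in>Q. q1 \<noteq> q2 \<longrightarrow> \<not> (\<exists>c. q1 = c *\<^sub>R q2)"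
  obtains u B c where "u \<in> Q" "B \<subseteq> Q - {u}" "independent B" "2 \<le> card B" "card B < card Q"
    "span B \<subseteq> L" "u = (\<Sum>v\<in>B. c v *\<^sub>R v)" "\<forall>v\<in>B. c v \<noteq> 0"
proof -
  have "finite Q" using assms(3) by (intro card_ge_0_finite) linarith
  have "dependent Q"
  proof (rule ccontr)
    assume "independent Q"
    then have "card Q \<le> dim L" using assms(2) independent_card_le_dim by blast
    then show False using assms(3) by simp
  qed
  obtain u B c where circuit: "u \<in> Q" "B \<subseteq> Q - {u}" "independent B" "2 \<le> card B"
    "u = (\<Sum>v\<in>B. c v *\<^sub>R v)" "\<forall>v\<in>B. c v \<noteq> 0"
    using exists_circuit[OF \<open>finite Q\<close> \<open>dependent Q\<close> assms(4) not_collinear] by blast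
  have "B \<subset> Q" using circuit(1,2) by blast
  then have "card B < card Q" by (rule psubset_card_mono[OF \<open>finite Q\<close>])
  moreover have "span B \<subseteq> L" using circuit(2) assms(1,2) by (meson Diff_subset order_trans span_minimal)
  ultimately show ?thesis by (rule that[OF circuit(1-4) _ _ circuit(5,6)])
qed

lemma cvec_collinear:
  assumes "cvec y = a *s w" "cvec y0 = b *s w" "y0 \<noteq> 0"
  obtains r where "y = r *\<^sub>R y0"
proof -
  obtain i where i: "y0$i \<noteq> 0" using assms(3) by (auto simp: vec_eq_iff)
  have "y$j = (y$i / y0$i) * y0$j" for j
  proof -
    have "cvec y $ j * cvec y0 $ i = cvec y $ i * cvec y0 $ j"
      unfolding assms(1,2) by (simp add: mult_ac)
    then have "complex_of_real (y$j * y0$i) = complex_of_real (y$i * y0$j)"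
      by (simp add: cvec_def)
    then have "y$j * y0$i = y$i * y0$j" by (simp only: of_real_eq_iff)
    then have "y$j = (y$i * y0$j) / y0$i" using i by (simp add: eq_divide_eq)
    then show ?thesis by simp
  qed
  then have "y = (y$i / y0$i) *\<^sub>R y0" unfolding vec_eq_iff vector_scaleR_component real_scaleR_def by blast
  then show ?thesis by (rule that)
qed

lemma cvec_eq_0_iff: "cvec y = 0 \<longleftrightarrow> y = 0"
  by (simp add: cvec_def vec_eq_iff)

lemma in_span_C_cvec: "y \<in> L \<Longrightarrow> in_span_C L (cvec y)"
  by (simp add: in_span_C_def cvec_def inner_vec_def flip: of_real_mult of_real_sum)

lemma finite_representatives_up_to_scaling:
  assumes "finite P" and P: "\<And>y. y \<in> R \<Longrightarrow> \<exists>w\<in>P. \<exists>a. cvec y = a *s w" and "0 \<notin> R"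
  obtains Y0 where "finite Y0" "Y0 \<subseteq> R" "\<And>y. y \<in> R \<Longrightarrow> \<exists>y0\<in>Y0. \<exists>r. y = r *\<^sub>R y0"
proof -
  define on_line where "on_line w = {y \<in> R. \<exists>a. cvec y = a *s w}" for w
  define Y0 where "Y0 = (\<lambda>w. SOME y. y \<in> on_line w) ` {w \<in> P. on_line w \<noteq> {}}"
  have rep: "(SOME y. y \<in> on_line w) \<in> on_line w" if "on_line w \<noteq> {}" for w
    using that by (simp add: some_in_eq)
  have "finite Y0" using \<open>finite P\<close> by (simp add: Y0_def)
  moreover have "Y0 \<subseteq> R" using rep by (auto simp: Y0_def on_line_def)
  moreover have "\<exists>y0\<in>Y0. \<exists>r. y = r *\<^sub>R y0" if "y \<in> R" for y
  proof -
    obtain w a where "w \<in> P" "cvec y = a *s w" using P[OF \<open>y \<in> R\<close>] by blast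
    then have "y \<in> on_line w" using \<open>y \<in> R\<close> by (auto simp: on_line_def)
    define y0 where "y0 = (SOME y. y \<in> on_line w)"
    have "y0 \<in> on_line w" using rep \<open>y \<in> on_line w\<close> by (auto simp: y0_def)
    then obtain b where "cvec y0 = b *s w" "y0 \<noteq> 0" using \<open>0 \<notin> R\<close> by (auto simp: on_line_def)
    then obtain r where "y = r *\<^sub>R y0" using cvec_collinear[OF \<open>cvec y = a *s w\<close>] by blast
    moreover have "y0 \<in> Y0" using \<open>w \<in> P\<close> \<open>y \<in> on_line w\<close> by (auto simp: Y0_def y0_def)
    ultimately show ?thesis by blast
  qed
  ultimately show ?thesis by (rule that)
qed

lemma independent_sum_representation:
  fixes B :: "(real^'n::finite) set"
  assumes "independent B" "y \<in> span B"
  shows "y = (\<Sum>v\<in>B. real_vector.representation B y v *\<^sub>R v)"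
  using real_vector.sum_representation_eq[OF assms finiteI_independent[OF assms(1)] order_refl] by simp

lemma inner_eq_sum_representation:
  fixes B :: "(real^'n::finite) set"
  assumes "independent B" "y \<in> span B"
  shows "h \<bullet> y = (\<Sum>v\<in>B. real_vector.representation B y v * (h \<bullet> v))"
proof -
  define r where "r = real_vector.representation B y"
  have "y = (\<Sum>v\<in>B. r v *\<^sub>R v)" unfolding r_def using assms by (rule independent_sum_representation)
  then have "h \<bullet> y = (\<Sum>v\<in>B. r v * (h \<bullet> v))" by (simp add: inner_sum_right)
  then show ?thesis by (simp add: r_def)
qed

lemma exists_functional_sign_avoiding:
  fixes B :: "(real^'n::finite) set"
  assumes "independent B" "finite Y0" "Y0 \<subseteq> span B - {0}" "\<forall>v\<in>B. c v \<noteq> 0"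
  obtains h where "\<forall>v\<in>B. 0 < c v * (h \<bullet> v)" "\<forall>y\<in>Y0. h \<bullet> y \<noteq> 0"
proof -
  have "finite B" using assms(1) by (rule finiteI_independent)
  define coord where "coord y v = real_vector.representation B y v * c v" for y v
  have "\<exists>v\<in>B. a v \<noteq> 0" if "a \<in> coord ` Y0" for a
  proof (rule ccontr)
    obtain y where y: "y \<in> Y0" "a = coord y" using \<open>a \<in> coord ` Y0\<close> by blast
    assume "\<not> (\<exists>v\<in>B. a v \<noteq> 0)"
    then have "\<forall>v\<in>B. real_vector.representation B y v = 0" using assms(4) by (simp add: y(2) coord_def)
    then have "y = 0"
      using independent_sum_representation[OF assms(1), of y] assms(3) y(1) by (simp add: subset_iff)
    then show False using assms(3) y(1) by blast
  qed
  from exists_pos_weights_avoiding[OF finite_imageI[OF assms(2)] \<open>finite B\<close> this]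
  obtain t where t: "\<forall>v\<in>B. t v > 0" "\<forall>a\<in>coord ` Y0. (\<Sum>v\<in>B. a v * t v) \<noteq> 0" .
  obtain h where h: "\<And>v. v \<in> B \<Longrightarrow> h \<bullet> v = c v * t v"
    using exists_inner_eq_on_independent[OF assms(1), of "\<lambda>v. c v * t v"] by blast
  have "c v * (h \<bullet> v) = (c v)\<^sup>2 * t v" if "v \<in> B" for v by (simp add: h[OF that] power2_eq_square)
  then have "\<forall>v\<in>B. 0 < c v * (h \<bullet> v)" using t(1) assms(4) by simp
  moreover have "\<forall>y\<in>Y0. h \<bullet> y \<noteq> 0"
    using t(2) assms(3)
    by (auto simp: inner_eq_sum_representation[OF assms(1)] h coord_def mult.assoc subset_iff)
  ultimately show ?thesis by (rule that)
qed

lemma exists_functional_avoiding_real_points: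
  fixes B :: "(real^'n::finite) set"
  assumes "finite P" and P: "\<forall>z\<in>Z. z \<noteq> 0 \<and> in_span_C L z \<longrightarrow> (\<exists>w\<in>P. \<exists>a. z = a *s w)"
    and "span B \<subseteq> L" "independent B" "\<forall>v\<in>B. c v \<noteq> 0"
  obtains h where "\<forall>v\<in>B. 0 < c v * (h \<bullet> v)"
    "\<And>y. y \<in> span B \<Longrightarrow> y \<noteq> 0 \<Longrightarrow> cvec y \<in> Z \<Longrightarrow> h \<bullet> y \<noteq> 0"
proof -
  define R where "R = {y \<in> span B. y \<noteq> 0 \<and> cvec y \<in> Z}"
  have "\<exists>w\<in>P. \<exists>a. cvec y = a *s w" if "y \<in> R" for y
  proof -
    have "in_span_C L (cvec y)" using that \<open>span B \<subseteq> L\<close> by (intro in_span_C_cvec) (auto simp: R_def)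
    then show ?thesis using P that by (simp add: R_def cvec_eq_0_iff)
  qed
  moreover have "0 \<notin> R" by (simp add: R_def)
  ultimately obtain Y0 where Y0: "finite Y0" "Y0 \<subseteq> R" "\<And>y. y \<in> R \<Longrightarrow> \<exists>y0\<in>Y0. \<exists>r. y = r *\<^sub>R y0"
    using finite_representatives_up_to_scaling[OF \<open>finite P\<close>] by blast
  have "Y0 \<subseteq> span B - {0}" using Y0(2) by (auto simp: R_def)
  from exists_functional_sign_avoiding[OF \<open>independent B\<close> Y0(1) this assms(5)]
  obtain h where h: "\<forall>v\<in>B. 0 < c v * (h \<bullet> v)" "\<forall>y\<in>Y0. h \<bullet> y \<noteq> 0" by blast
  have "h \<bullet> y \<noteq> 0" if y: "y \<in> R" for y
  proof -
    obtain y0 r where "y0 \<in> Y0" "y = r *\<^sub>R y0" using Y0(3)[OF y] by blast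
    moreover have "r \<noteq> 0" using y \<open>y = r *\<^sub>R y0\<close> by (auto simp: R_def)
    ultimately show ?thesis using h(2) by simp
  qed
  with h(1) show ?thesis by (intro that) (auto simp: R_def)
qed

section \<open>The circuit functional\<close>

lemma weighted_Cauchy_Schwarz:
  fixes a b c :: "'v \<Rightarrow> real"
  assumes pos: "\<And>v. v \<in> B \<Longrightarrow> 0 < c v * b v"
  shows "(\<Sum>v\<in>B. c v * a v)\<^sup>2 \<le> (\<Sum>v\<in>B. c v * b v) * (\<Sum>v\<in>B. c v * (a v)\<^sup>2 / b v)"
proof -
  have nz: "c v \<noteq> 0" "b v \<noteq> 0" if "v \<in> B" for v using pos[OF that] by auto
  have "(\<Sum>v\<in>B. c v * a v)\<^sup>2 = (\<Sum>v\<in>B. sqrt (c v * b v) * (c v * a v / sqrt (c v * b v)))\<^sup>2"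
    using nz by (intro arg_cong[where f="\<lambda>x. x\<^sup>2"] sum.cong) auto
  also have "\<dots> \<le> (\<Sum>v\<in>B. (sqrt (c v * b v))\<^sup>2) * (\<Sum>v\<in>B. (c v * a v / sqrt (c v * b v))\<^sup>2)"
    by (rule Cauchy_Schwarz_ineq_sum)
  also have "\<dots> = (\<Sum>v\<in>B. c v * b v) * (\<Sum>v\<in>B. c v * (a v)\<^sup>2 / b v)"
    using pos by (intro arg_cong2[where f="(*)"] sum.cong)
      (auto simp: power_divide power_mult_distrib less_imp_le power2_eq_square)
  finally show ?thesis .
qed

lemma member_lt_sum:
  fixes f :: "'a \<Rightarrow> 'b::ordered_cancel_comm_monoid_add"
  assumes "finite B" "2 \<le> card B" "v0 \<in> B" "\<forall>v\<in>B. 0 < f v"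
  shows "f v0 < sum f B"
proof -
  have "B - {v0} \<noteq> {}"
  proof
    assume "B - {v0} = {}"
    then have "card B \<le> card {v0}" by (intro card_mono) auto
    then show False using assms(2) by simp
  qed
  then have "0 < sum f (B - {v0})" using assms(1,4) by (intro sum_pos) auto
  then show ?thesis using sum.remove[OF assms(1,3), of f] by (metis add_strict_left_mono add_0_right)
qed

text \<open>The weights make the Gram form positive semidefinite by the weighted Cauchy--Schwarz
  inequality, with equality in the direction h.\<close>
definition circuit_functional ::
  "(real^'n) set \<Rightarrow> (real^'n \<Rightarrow> real) \<Rightarrow> real^'n \<Rightarrow> real^'n \<Rightarrow> (('n::finite \<Rightarrow> nat) \<Rightarrow> real)" where
  "circuit_functional B c h u =
     (\<lambda>\<alpha>. (\<Sum>v\<in>B. (c v / (h \<bullet> v)) * point_eval v \<alpha>) - (1 / (h \<bullet> u)) * point_eval u \<alpha>)"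

lemma quad_form_circuit_functional:
  "quad_form (gram (circuit_functional B c h u)) k =
     (\<Sum>v\<in>B. c v * (k \<bullet> v)\<^sup>2 / (h \<bullet> v)) - (k \<bullet> u)\<^sup>2 / (h \<bullet> u)"
  unfolding circuit_functional_def gram_diff gram_sum gram_scale gram_point_eval
  by (simp add: quad_form_diff quad_form_sum quad_form_scaleR quad_form_outer)

lemma circuit_functional_in_sigma_dual:
  assumes "finite B" "B \<noteq> {}" and on_X: "\<forall>v\<in>insert u B. cvec v \<in> Z"
    and u: "u = (\<Sum>v\<in>B. c v *\<^sub>R v)" and pos: "\<forall>v\<in>B. 0 < c v * (h \<bullet> v)"
  shows "circuit_functional B c h u \<in> sigma_dual Z"
  unfolding sigma_dual_iff
proof (intro conjI ballI allI)
  show "is_dual2 (circuit_functional B c h u)"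
    by (simp add: circuit_functional_def is_dual2_def point_eval_def)
next
  fix f assume "f \<in> idealX Z 2"
  then have "pairing (point_eval x) f = 0" if "x \<in> insert u B" for x
    using point_eval_in_sigma_dual on_X that by (auto simp: sigma_dual_iff)
  then show "pairing (circuit_functional B c h u) f = 0"
    unfolding circuit_functional_def pairing_diff pairing_sum pairing_scale by simp
next
  fix k
  have inner_u: "x \<bullet> u = (\<Sum>v\<in>B. c v * (x \<bullet> v))" for x by (simp add: u inner_sum_right)
  have "0 < h \<bullet> u" unfolding inner_u using assms(1,2) pos by (intro sum_pos) auto
  moreover have "(k \<bullet> u)\<^sup>2 \<le> (h \<bullet> u) * (\<Sum>v\<in>B. c v * (k \<bullet> v)\<^sup>2 / (h \<bullet> v))"
    unfolding inner_u using pos by (intro weighted_Cauchy_Schwarz) auto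
  ultimately show "0 \<le> quad_form (gram (circuit_functional B c h u)) k"
    by (simp add: quad_form_circuit_functional field_simps)
qed

lemma circuit_functional_kernel:
  assumes u: "u = (\<Sum>v\<in>B. c v *\<^sub>R v)" and pos: "\<forall>v\<in>B. 0 < c v * (h \<bullet> v)"
  shows "quad_form (gram (circuit_functional B c h u)) h = 0"
    and "\<forall>v\<in>B. k \<bullet> v = 0 \<Longrightarrow> quad_form (gram (circuit_functional B c h u)) k = 0"
proof -
  have inner_u: "x \<bullet> u = (\<Sum>v\<in>B. c v * (x \<bullet> v))" for x by (simp add: u inner_sum_right)
  have "(\<Sum>v\<in>B. c v * (h \<bullet> v)\<^sup>2 / (h \<bullet> v)) = h \<bullet> u"
    unfolding inner_u using pos by (intro sum.cong) (auto simp: power2_eq_square)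
  then show "quad_form (gram (circuit_functional B c h u)) h = 0"
    by (simp add: quad_form_circuit_functional power2_eq_square)
  show "quad_form (gram (circuit_functional B c h u)) k = 0" if "\<forall>v\<in>B. k \<bullet> v = 0"
    using that by (simp add: quad_form_circuit_functional inner_u)
qed

lemma circuit_functional_nonzero:
  assumes "independent B" "2 \<le> card B"
    and u: "u = (\<Sum>v\<in>B. c v *\<^sub>R v)" and pos: "\<forall>v\<in>B. 0 < c v * (h \<bullet> v)"
  shows "circuit_functional B c h u \<noteq> (\<lambda>_. 0)"
proof
  assume zero: "circuit_functional B c h u = (\<lambda>_. 0)"
  have "finite B" using assms(1) by (rule finiteI_independent)
  have "B \<noteq> {}" using assms(2) by auto
  then obtain v0 where "v0 \<in> B" by blast
  have inner_u: "x \<bullet> u = (\<Sum>v\<in>B. c v * (x \<bullet> v))" for x by (simp add: u inner_sum_right)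
  obtain k where k: "\<And>v. v \<in> B \<Longrightarrow> k \<bullet> v = (if v = v0 then 1 else 0)"
    using exists_inner_eq_on_independent[OF assms(1), of "\<lambda>v. if v = v0 then 1 else 0"] by blast
  have pick: "(\<Sum>v\<in>B. g v * (k \<bullet> v)) = g v0" for g
  proof -
    have "(\<Sum>v\<in>B. g v * (k \<bullet> v)) = (\<Sum>v\<in>B. if v = v0 then g v else 0)"
      using k by (intro sum.cong) auto
    then show ?thesis using \<open>finite B\<close> \<open>v0 \<in> B\<close> by simp
  qed
  have v0_pos: "0 < c v0 * (h \<bullet> v0)" using pos \<open>v0 \<in> B\<close> by blast
  have hu: "c v0 * (h \<bullet> v0) < h \<bullet> u"
    unfolding inner_u using \<open>finite B\<close> assms(2) \<open>v0 \<in> B\<close> pos by (rule member_lt_sum)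
  then have "c v0 * (h \<bullet> v0) / (h \<bullet> u) < 1" using v0_pos by simp
  moreover have "0 < c v0 / (h \<bullet> v0)" using v0_pos by (simp add: zero_less_divide_iff zero_less_mult_iff)
  ultimately have "0 < c v0 / (h \<bullet> v0) * (1 - c v0 * (h \<bullet> v0) / (h \<bullet> u))"
    by (intro mult_pos_pos) simp_all
  also have "\<dots> = c v0 / (h \<bullet> v0) - (c v0)\<^sup>2 / (h \<bullet> u)"
  proof -
    have "h \<bullet> v0 \<noteq> 0" "h \<bullet> u \<noteq> 0" using v0_pos hu by auto
    then show ?thesis by (simp add: field_simps power2_eq_square)
  qed
  also have "\<dots> = quad_form (gram (circuit_functional B c h u)) k"
  proof -
    have "(\<Sum>v\<in>B. c v * (k \<bullet> v)\<^sup>2 / (h \<bullet> v)) = (\<Sum>v\<in>B. c v / (h \<bullet> v) * (k \<bullet> v))"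
      using k by (intro sum.cong) (auto simp: power2_eq_square)
    then show ?thesis
      using pick[of "\<lambda>v. c v / (h \<bullet> v)"] pick[of c]
      by (simp add: quad_form_circuit_functional inner_u)
  qed
  also have "\<dots> = 0" by (simp add: zero gram_zero quad_form_def)
  finally show False by simp
qed

lemma hankel_index_le_lrank:
  assumes "extreme_ray (sigma_dual Z) l" "1 < lrank l"
  shows "hankel_index Z \<le> enat (lrank l)"
  unfolding hankel_index_def using assms by (auto intro!: Least_le)

lemma lrank_eq_rank_gram: "lrank l = rank (gram l)"
  by (simp add: lrank_def gram_def)

lemma sigma_dual_rank_le_one_point:
  assumes quadrics: "\<And>z. z \<noteq> 0 \<Longrightarrow> (\<forall>f\<in>idealX Z 2. ceval 2 f z = 0) \<Longrightarrow> z \<in> Z"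
    and l: "l \<in> sigma_dual Z" "l \<noteq> (\<lambda>_. 0)" "rank (gram l) \<le> 1"
  obtains y where "y \<noteq> 0" "cvec y \<in> Z" "y \<in> range ((*v) (gram l))"
proof -
  obtain y where y: "gram l = outer y"
    using psd_rank_le_one_eq_outer[OF transpose_gram sigma_dual_quad_form_nonneg[OF l(1)] l(3)] by blast
  have "y \<noteq> 0" using y sigma_dual_eq_zeroI[OF l(1)] l(2) by (auto simp: outer_def vec_eq_iff)
  then have "gram l *v ((1 / (y \<bullet> y)) *\<^sub>R y) = y" by (simp add: y outer_mult_vector)
  moreover have "cvec y \<in> Z"
    using quadrics \<open>y \<noteq> 0\<close> sigma_dual_gram_outer[OF l(1) y] by (simp add: cvec_eq_0_iff)
  ultimately show ?thesis using that \<open>y \<noteq> 0\<close> by (metis rangeI)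
qed

lemma exists_extreme_ray_of_circuit:
  fixes B :: "(real^'n::finite) set"
  assumes quadrics: "\<And>z. z \<noteq> 0 \<Longrightarrow> (\<forall>f\<in>idealX Z 2. ceval 2 f z = 0) \<Longrightarrow> z \<in> Z"
    and B: "independent B" "2 \<le> card B" "\<forall>v\<in>insert u B. cvec v \<in> Z" "u = (\<Sum>v\<in>B. c v *\<^sub>R v)"
    and pos: "\<forall>v\<in>B. 0 < c v * (h \<bullet> v)"
    and avoid: "\<And>y. y \<in> span B \<Longrightarrow> y \<noteq> 0 \<Longrightarrow> cvec y \<in> Z \<Longrightarrow> h \<bullet> y \<noteq> 0"
  obtains l where "extreme_ray (sigma_dual Z) l" "1 < lrank l" "lrank l < card B"
proof -
  define l0 where "l0 = circuit_functional B c h u"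
  have "finite B" using B(1) by (rule finiteI_independent)
  have "B \<noteq> {}" using B(2) by auto
  have l0: "l0 \<in> sigma_dual Z" "l0 \<noteq> (\<lambda>_. 0)" "quad_form (gram l0) h = 0"
    "\<And>k. \<forall>v\<in>B. k \<bullet> v = 0 \<Longrightarrow> quad_form (gram l0) k = 0"
    unfolding l0_def
    using circuit_functional_in_sigma_dual[OF \<open>finite B\<close> \<open>B \<noteq> {}\<close> B(3,4) pos]
      circuit_functional_nonzero[OF B(1,2,4) pos] circuit_functional_kernel[OF B(4) pos]
    by blast+
  obtain l where l: "extreme_ray (sigma_dual Z) l" "l \<in> below Z l0"
    using exists_extreme_ray_below[OF l0(1,2)] by blast
  have "l \<in> sigma_dual Z" "l \<noteq> (\<lambda>_. 0)" using l(1) by (auto simp: extreme_ray_def)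
  have ker_B: "gram l *v k = 0" if "\<forall>v\<in>B. k \<bullet> v = 0" for k
    using l(2) l0(4)[OF that] by (rule below_kernel)
  have ker_h: "gram l *v h = 0"
    using l(2) l0(3) by (rule below_kernel)
  have range: "gram l *v x \<in> span B" "h \<bullet> (gram l *v x) = 0" for x
    using symmetric_range_subset_span[OF transpose_gram ker_B]
      symmetric_inner_matrix[OF transpose_gram[of l], of h x] ker_h by simp_all
  obtain v where "v \<in> B" using \<open>B \<noteq> {}\<close> by blast
  then have "rank (gram l) < card B"
    using pos by (intro rank_lt_card_of_kernel[OF transpose_gram B(1) ker_B ker_h, of v]) (auto simp: span_base)
  moreover have "1 < rank (gram l)"
  proof (rule ccontr)
    assume "\<not> 1 < rank (gram l)"
    then have "rank (gram l) \<le> 1" by simp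
    from sigma_dual_rank_le_one_point[OF quadrics \<open>l \<in> sigma_dual Z\<close> \<open>l \<noteq> _\<close> this]
    obtain y x where "y \<noteq> 0" "cvec y \<in> Z" "y = gram l *v x" by blast
    then show False using avoid range(1,2)[of x] by simp
  qed
  ultimately show ?thesis using l(1) that by (simp add: lrank_eq_rank_gram)
qed

theorem theorem4p1:
  fixes F :: "(nat \<times> (('n::finite \<Rightarrow> nat) \<Rightarrow> real)) set"
    and L :: "(real^'n) set"
    and p :: nat
  assumes forms: "\<forall>(d,f)\<in>F. is_form d f"
    and nondeg: "idealX (Xpts F) 1 = {\<lambda>_. 0}"
    and quadrics: "\<forall>z. z \<noteq> 0 \<longrightarrow> (\<forall>f\<in>idealX (Xpts F) 2. ceval 2 f z = 0) \<longrightarrow> z \<in> Xpts F"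
    and W: "subspace L" "dim L = p + 1"
    and zerodim: "\<exists>P. finite P \<and> (\<forall>z\<in>Xpts F. z \<noteq> 0 \<and> in_span_C L z \<longrightarrow> (\<exists>w\<in>P. \<exists>c. z = c *s w))"
    and points: "\<exists>Q. card Q = p + 2 \<and> Q \<subseteq> L \<and>
       (\<forall>q\<in>Q. q \<noteq> 0 \<and> cvec q \<in> Xpts F \<and> reduced_point (Xpts F) L q) \<and>
       (\<forall>q1\<in>Q. \<forall>q2\<in>Q. q1 \<noteq> q2 \<longrightarrow> \<not> (\<exists>c. q1 = c *\<^sub>R q2))"
  shows "hankel_index (Xpts F) \<le> enat p"
proof -
  obtain Q where Q: "card Q = p + 2" "Q \<subseteq> L" "0 \<notin> Q" "\<forall>q\<in>Q. cvec q \<in> Xpts F"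
    and not_collinear: "\<forall>q1\<in>Q. \<forall>q2\<in>Q. q1 \<noteq> q2 \<longrightarrow> \<not> (\<exists>c. q1 = c *\<^sub>R q2)"
    using points by blast
  have "dim L < card Q" using Q(1) W(2) by simp
  from exists_circuit_in_subspace[OF W(1) Q(2) this Q(3) not_collinear]
  obtain u B c where circuit: "u \<in> Q" "B \<subseteq> Q - {u}" "independent B" "2 \<le> card B"
    "card B < card Q" "span B \<subseteq> L" "u = (\<Sum>v\<in>B. c v *\<^sub>R v)" "\<forall>v\<in>B. c v \<noteq> 0" .
  obtain P where "finite P" "\<forall>z\<in>Xpts F. z \<noteq> 0 \<and> in_span_C L z \<longrightarrow> (\<exists>w\<in>P. \<exists>a. z = a *s w)"
    using zerodim by blast
  from exists_functional_avoiding_real_points[OF this circuit(6,3,8)]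
  obtain h where "\<forall>v\<in>B. 0 < c v * (h \<bullet> v)"
    "\<And>y. y \<in> span B \<Longrightarrow> y \<noteq> 0 \<Longrightarrow> cvec y \<in> Xpts F \<Longrightarrow> h \<bullet> y \<noteq> 0" by blast
  moreover have "\<forall>v\<in>insert u B. cvec v \<in> Xpts F" using circuit(1,2) Q(4) by blast
  ultimately obtain l where l: "extreme_ray (sigma_dual (Xpts F)) l" "1 < lrank l" "lrank l < card B"
    using exists_extreme_ray_of_circuit[OF _ circuit(3,4) _ circuit(7)] quadrics by blast
  have "hankel_index (Xpts F) \<le> enat (lrank l)" using l(1,2) by (rule hankel_index_le_lrank)
  also have "\<dots> \<le> enat p" using l(3) circuit(5) Q(1) by simp
  finally show ?thesis .
qed

end
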